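(* Let $H$ be a complex Hilbert space and $\mathcal S(H)$ the set of bounded self-adjoint operators on $H$ with the logical order $\preceq$. If $A,B,C \in \mathcal S(H)$ and $A \preceq C$, $B \preceq C$, then the meet $A \curlywedge B$ and the join $A \curlyvee B$ of $A$ and $B$ in $(\mathcal S(H),\preceq)$ exist, and \[ A \curlywedge B = C(P_A \wedge P_B), \qquad A \curlyvee B = C(P_A \vee P_B). \]
   Context: For $A \in \mathcal S(H)$, $P_A$ denotes the orthogonal projection onto the closure of the range of $A$; $\wedge$ and $\vee$ denote meet and join in the lattice of orthogonal projections (ordered by $P_1 \le P_2$ iff $P_1P_2 = P_1$). The logical order: $A \preceq B$ iff $B = A + D$ for some $D \in \mathcal S(H)$ with $AD = O$; equivalently $A = BP_A$. Juxtaposition denotes operator composition. *)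

theory Defs
  imports "HOL-Analysis.Analysis"
begin

class complex_hilbert = banach +
  fixes scaleC :: "complex \<Rightarrow> 'a \<Rightarrow> 'a" (infixr \<open>*\<^sub>C\<close> 75)
    and cinner :: "'a \<Rightarrow> 'a \<Rightarrow> complex"
  assumes scaleC_add_right: "a *\<^sub>C (x + y) = a *\<^sub>C x + a *\<^sub>C y"
    and scaleC_add_left: "(a + b) *\<^sub>C x = a *\<^sub>C x + b *\<^sub>C x"
    and scaleC_scaleC: "a *\<^sub>C (b *\<^sub>C x) = (a * b) *\<^sub>C x"
    and scaleC_one: "1 *\<^sub>C x = x"
    and scaleR_scaleC: "r *\<^sub>R x = complex_of_real r *\<^sub>C x"
    and cinner_commute: "cinner x y = cnj (cinner y x)"
    and cinner_add_left: "cinner (x + y) z = cinner x z + cinner y z"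
    and cinner_scaleC_left: "cinner (a *\<^sub>C x) y = cnj a * cinner x y"
    and cinner_self_norm: "cinner x x = complex_of_real ((norm x)\<^sup>2)"

text \<open>Non-vacuity: the complex numbers form a complex Hilbert space.\<close>

instantiation complex :: complex_hilbert
begin
definition scaleC_complex :: "complex \<Rightarrow> complex \<Rightarrow> complex" where
  "scaleC_complex a x = a * x"
definition cinner_complex :: "complex \<Rightarrow> complex \<Rightarrow> complex" where
  "cinner_complex x y = cnj x * y"
instance
proof
  fix a b x y z :: complex and r :: real
  show "a *\<^sub>C (x + y) = a *\<^sub>C x + a *\<^sub>C y" by (simp add: scaleC_complex_def distrib_left)
  show "(a + b) *\<^sub>C x = a *\<^sub>C x + b *\<^sub>C x" by (simp add: scaleC_complex_def distrib_right)
  show "a *\<^sub>C (b *\<^sub>C x) = (a * b) *\<^sub>C x" by (simp add: scaleC_complex_def mult.assoc)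
  show "1 *\<^sub>C x = x" by (simp add: scaleC_complex_def)
  show "r *\<^sub>R x = complex_of_real r *\<^sub>C x" by (simp add: scaleC_complex_def scaleR_conv_of_real)
  show "cinner x y = cnj (cinner y x)" by (simp add: cinner_complex_def mult.commute)
  show "cinner (x + y) z = cinner x z + cinner y z" by (simp add: cinner_complex_def distrib_right)
  show "cinner (a *\<^sub>C x) y = cnj a * cinner x y" by (simp add: cinner_complex_def scaleC_complex_def mult.assoc)
  show "cinner x x = complex_of_real ((norm x)\<^sup>2)" by (simp add: cinner_complex_def complex_norm_square mult.commute del: of_real_power)
qed
end

definition bounded_op :: "('a::complex_hilbert \<Rightarrow> 'a) \<Rightarrow> bool" where
  "bounded_op A \<longleftrightarrow>
     (\<forall>x y. A (x + y) = A x + A y) \<and> (\<forall>a x. A (a *\<^sub>C x) = a *\<^sub>C A x) \<and>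
     (\<exists>K. \<forall>x. norm (A x) \<le> norm x * K)"

definition SA :: "('a::complex_hilbert \<Rightarrow> 'a) set" where
  "SA = {A. bounded_op A \<and> (\<forall>x y. cinner (A x) y = cinner x (A y))}"

definition logical_le :: "('a::complex_hilbert \<Rightarrow> 'a) \<Rightarrow> ('a \<Rightarrow> 'a) \<Rightarrow> bool" where
  "logical_le A B \<longleftrightarrow> (\<exists>D \<in> SA. B = (\<lambda>x. A x + D x) \<and> A \<circ> D = (\<lambda>_. 0))"

definition is_proj :: "('a::complex_hilbert \<Rightarrow> 'a) \<Rightarrow> bool" where
  "is_proj P \<longleftrightarrow> P \<in> SA \<and> P \<circ> P = P"

definition proj_le :: "('a::complex_hilbert \<Rightarrow> 'a) \<Rightarrow> ('a \<Rightarrow> 'a) \<Rightarrow> bool" where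
  "proj_le P Q \<longleftrightarrow> P \<circ> Q = P"

definition range_proj :: "('a::complex_hilbert \<Rightarrow> 'a) \<Rightarrow> ('a \<Rightarrow> 'a)" where
  "range_proj A = (THE P. is_proj P \<and> range P = closure (range A))"

definition proj_meet :: "('a::complex_hilbert \<Rightarrow> 'a) \<Rightarrow> ('a \<Rightarrow> 'a) \<Rightarrow> ('a \<Rightarrow> 'a)" where
  "proj_meet P Q = (THE R. is_proj R \<and> proj_le R P \<and> proj_le R Q \<and>
     (\<forall>S. is_proj S \<and> proj_le S P \<and> proj_le S Q \<longrightarrow> proj_le S R))"

definition proj_join :: "('a::complex_hilbert \<Rightarrow> 'a) \<Rightarrow> ('a \<Rightarrow> 'a) \<Rightarrow> ('a \<Rightarrow> 'a)" where
  "proj_join P Q = (THE R. is_proj R \<and> proj_le P R \<and> proj_le Q R \<and>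
     (\<forall>S. is_proj S \<and> proj_le P S \<and> proj_le Q S \<longrightarrow> proj_le R S))"

definition is_logical_meet :: "('a::complex_hilbert \<Rightarrow> 'a) \<Rightarrow> ('a \<Rightarrow> 'a) \<Rightarrow> ('a \<Rightarrow> 'a) \<Rightarrow> bool" where
  "is_logical_meet A B M \<longleftrightarrow> M \<in> SA \<and> logical_le M A \<and> logical_le M B \<and>
     (\<forall>N \<in> SA. logical_le N A \<and> logical_le N B \<longrightarrow> logical_le N M)"

definition is_logical_join :: "('a::complex_hilbert \<Rightarrow> 'a) \<Rightarrow> ('a \<Rightarrow> 'a) \<Rightarrow> ('a \<Rightarrow> 'a) \<Rightarrow> bool" where
  "is_logical_join A B J \<longleftrightarrow> J \<in> SA \<and> logical_le A J \<and> logical_le B J \<and>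
     (\<forall>N \<in> SA. logical_le A N \<and> logical_le B N \<longrightarrow> logical_le J N)"

end

theory Submission
  imports Defs
begin

text \<open>If \<open>A \<preceq> C\<close> then \<open>A = C P\<^sub>A\<close> and, taking adjoints, \<open>P\<^sub>A\<close> commutes with \<open>C\<close>; conversely
  \<open>X = Y Q\<close> with \<open>X, Y\<close> self-adjoint and \<open>Q\<close> a projection already gives \<open>X \<preceq> Y\<close>. Since a
  self-adjoint operator commuting with \<open>P\<^sub>A\<close> and \<open>P\<^sub>B\<close> also commutes with \<open>P\<^sub>A \<and> P\<^sub>B\<close> and
  \<open>P\<^sub>A \<or> P\<^sub>B\<close>, the candidates \<open>C(P\<^sub>A \<and> P\<^sub>B)\<close> and \<open>C(P\<^sub>A \<or> P\<^sub>B)\<close> are self-adjoint and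
  lie below \<open>A, B\<close> resp. above them. A common lower bound \<open>N\<close> satisfies
  \<open>N = C P\<^sub>N = C(P\<^sub>A \<and> P\<^sub>B) P\<^sub>N\<close> because \<open>P\<^sub>N \<le> P\<^sub>A \<and> P\<^sub>B\<close>. A common upper bound \<open>N\<close> agrees
  with \<open>C\<close> on the ranges of \<open>P\<^sub>A\<close> and \<open>P\<^sub>B\<close>, so the self-adjoint \<open>N - C\<close> maps into
  \<open>ker P\<^sub>A \<inter> ker P\<^sub>B\<close> and hence vanishes on the range of \<open>P\<^sub>A \<or> P\<^sub>B\<close>. The lattice operations
  on projections come from the projection theorem for closed subspaces.\<close>

section \<open>Inner products and operators\<close>

lemma cinner_add_right: "cinner x (y + z) = cinner x y + cinner x z"
  for x y z :: "'a::complex_hilbert"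
  by (metis cinner_add_left cinner_commute complex_cnj_add)

lemma cinner_scaleC_right: "cinner x (a *\<^sub>C y) = a * cinner x y"
  for x y :: "'a::complex_hilbert"
  by (metis cinner_scaleC_left cinner_commute complex_cnj_cnj complex_cnj_mult)

lemma additive_cinner_left: "Modules.additive (\<lambda>x::'a::complex_hilbert. cinner x z)"
  by (simp add: Modules.additive_def cinner_add_left)

lemma additive_cinner_right: "Modules.additive (cinner (x::'a::complex_hilbert))"
  by (simp add: Modules.additive_def cinner_add_right)

lemma cinner_zero_left [simp]: "cinner 0 y = 0" for y :: "'a::complex_hilbert"
  by (rule additive.zero [OF additive_cinner_left])

lemma cinner_zero_right [simp]: "cinner x 0 = 0" for x :: "'a::complex_hilbert"
  by (rule additive.zero [OF additive_cinner_right])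

lemma cinner_diff_left: "cinner (x - y) z = cinner x z - cinner y z"
  for x y z :: "'a::complex_hilbert"
  by (rule additive.diff [OF additive_cinner_left])

lemma cinner_diff_right: "cinner x (y - z) = cinner x y - cinner x z"
  for x y z :: "'a::complex_hilbert"
  by (rule additive.diff [OF additive_cinner_right])

lemma cinner_eq_zero_iff [simp]: "cinner x x = 0 \<longleftrightarrow> x = 0" for x :: "'a::complex_hilbert"
  by (simp add: cinner_self_norm)

lemma cinner_left_cancel: "(\<And>z. cinner x z = cinner y z) \<Longrightarrow> x = y"
  for x y :: "'a::complex_hilbert"
  by (metis cinner_diff_left cinner_eq_zero_iff right_minus_eq)

lemma Re_cinner_self: "Re (cinner x x) = (norm x)\<^sup>2" for x :: "'a::complex_hilbert"
  by (simp add: cinner_self_norm del: of_real_power)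

lemma power2_norm_add:
  "(norm (x + y))\<^sup>2 = (norm x)\<^sup>2 + (norm y)\<^sup>2 + 2 * Re (cinner x y)"
  for x y :: "'a::complex_hilbert"
  using Re_cinner_self[of "x + y"] cinner_commute[of y x]
  by (simp add: cinner_add_left cinner_add_right Re_cinner_self)

lemma power2_norm_diff:
  "(norm (x - y))\<^sup>2 = (norm x)\<^sup>2 + (norm y)\<^sup>2 - 2 * Re (cinner x y)"
  for x y :: "'a::complex_hilbert"
  using power2_norm_add[of x "- y"] additive.minus[OF additive_cinner_right, of x y] by simp

lemma parallelogram_law:
  "(norm (x + y))\<^sup>2 + (norm (x - y))\<^sup>2 = 2 * (norm x)\<^sup>2 + 2 * (norm y)\<^sup>2"
  for x y :: "'a::complex_hilbert"
  by (simp add: power2_norm_add power2_norm_diff)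

lemma norm_scaleC: "norm (a *\<^sub>C x) = cmod a * norm x" for x :: "'a::complex_hilbert"
proof -
  have "complex_of_real ((norm (a *\<^sub>C x))\<^sup>2) = cnj a * a * complex_of_real ((norm x)\<^sup>2)"
    by (metis cinner_self_norm cinner_scaleC_left cinner_scaleC_right mult.assoc)
  also have "\<dots> = complex_of_real ((cmod a * norm x)\<^sup>2)"
    using complex_norm_square[of a]
    by (simp add: mult.commute power_mult_distrib del: of_real_power)
  finally show ?thesis
    by (simp add: power2_eq_iff_nonneg del: of_real_power)
qed

lemma bounded_linear_scaleC: "bounded_linear (\<lambda>x::'a::complex_hilbert. a *\<^sub>C x)"
proof (rule bounded_linear_intro [of _ "cmod a"])
  show "a *\<^sub>C (x + y) = a *\<^sub>C x + a *\<^sub>C y" for x y :: 'a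
    by (rule scaleC_add_right)
  show "a *\<^sub>C (r *\<^sub>R x) = r *\<^sub>R (a *\<^sub>C x)" for r and x :: 'a
    by (simp add: scaleR_scaleC scaleC_scaleC mult.commute)
  show "norm (a *\<^sub>C x) \<le> norm x * cmod a" for x :: 'a
    by (simp add: norm_scaleC mult.commute)
qed

lemma bounded_op_imp_bounded_linear: "bounded_op A \<Longrightarrow> bounded_linear A"
  unfolding bounded_op_def
  by (metis bounded_linear_intro scaleR_scaleC)

lemma bounded_opI:
  assumes "bounded_linear A" and "\<And>a x. A (a *\<^sub>C x) = a *\<^sub>C A x"
  shows "bounded_op A"
  using assms bounded_linear.bounded [OF assms(1)] linear_add [OF bounded_linear.linear [OF assms(1)]]
  unfolding bounded_op_def by blast

lemma bounded_op_scaleC: "bounded_op A \<Longrightarrow> A (a *\<^sub>C x) = a *\<^sub>C A x"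
  by (simp add: bounded_op_def)

lemma bounded_op_diff: "bounded_op A \<Longrightarrow> A (x - y) = A x - A y"
  by (simp add: linear_diff bounded_linear.linear bounded_op_imp_bounded_linear)

lemma bounded_op_zero: "bounded_op A \<Longrightarrow> A 0 = 0"
  by (simp add: linear_0 bounded_linear.linear bounded_op_imp_bounded_linear)

lemma bounded_op_minus: "bounded_op A \<Longrightarrow> A (- x) = - A x"
  by (simp add: linear_neg bounded_linear.linear bounded_op_imp_bounded_linear)

lemma bounded_op_id: "bounded_op (\<lambda>x. x)"
  by (rule bounded_opI) (simp_all add: bounded_linear_ident)

lemma bounded_op_comp: "bounded_op A \<Longrightarrow> bounded_op B \<Longrightarrow> bounded_op (A \<circ> B)"
  unfolding comp_def
  by (rule bounded_opI)
    (simp_all add: bounded_linear_compose bounded_op_imp_bounded_linear bounded_op_scaleC)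

lemma bounded_op_fun_diff:
  assumes "bounded_op A" and "bounded_op B"
  shows "bounded_op (\<lambda>x. A x - B x)"
  using assms
  by (intro bounded_opI bounded_linear_sub)
    (simp_all add: bounded_op_imp_bounded_linear bounded_op_scaleC
      linear_diff [OF bounded_linear.linear [OF bounded_linear_scaleC]])

definition selfadjoint :: "('a::complex_hilbert \<Rightarrow> 'a) \<Rightarrow> bool" where
  "selfadjoint T \<longleftrightarrow> (\<forall>x y. cinner (T x) y = cinner x (T y))"

lemma SA_iff: "A \<in> SA \<longleftrightarrow> bounded_op A \<and> selfadjoint A"
  by (simp add: SA_def selfadjoint_def)

lemma SA_imp_bounded_op: "A \<in> SA \<Longrightarrow> bounded_op A"
  by (simp add: SA_iff)

lemma SA_imp_selfadjoint: "A \<in> SA \<Longrightarrow> selfadjoint A"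
  by (simp add: SA_iff)

lemma selfadjoint_fun_diff: "selfadjoint A \<Longrightarrow> selfadjoint B \<Longrightarrow> selfadjoint (\<lambda>x. A x - B x)"
  by (simp add: selfadjoint_def cinner_diff_left cinner_diff_right)

lemma selfadjoint_id: "selfadjoint (\<lambda>x. x)"
  by (simp add: selfadjoint_def)

lemma selfadjoint_zero: "selfadjoint (\<lambda>_::'a::complex_hilbert. 0)"
  by (simp add: selfadjoint_def)

lemma selfadjoint_comp_swap:
  assumes "selfadjoint S" "selfadjoint T" "selfadjoint R" and "S \<circ> T = R"
  shows "T \<circ> S = R"
proof
  fix x
  show "(T \<circ> S) x = R x"
  proof (rule cinner_left_cancel)
    fix y
    have "cinner (T (S x)) y = cinner x (S (T y))"
      using assms(1,2) by (simp add: selfadjoint_def)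
    also have "\<dots> = cinner (R x) y"
      using assms(3,4) by (auto simp: selfadjoint_def)
    finally show "cinner ((T \<circ> S) x) y = cinner (R x) y" by simp
  qed
qed

lemma SA_comp:
  assumes "S \<in> SA" "T \<in> SA" and "S \<circ> T = T \<circ> S"
  shows "S \<circ> T \<in> SA"
proof -
  have "cinner (S (T x)) y = cinner x (S (T y))" for x y
  proof -
    have "cinner (S (T x)) y = cinner x (T (S y))"
      using assms(1,2) by (simp add: SA_iff selfadjoint_def)
    also have "T (S y) = S (T y)"
      by (metis assms(3) comp_apply)
    finally show ?thesis .
  qed
  then show ?thesis
    using assms by (simp add: SA_iff bounded_op_comp selfadjoint_def)
qed

lemma selfadjoint_nilpotent_eq_zero:
  assumes "selfadjoint D" and "\<And>x. D (D x) = 0"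
  shows "D = (\<lambda>_. 0)"
proof
  fix x
  have "cinner (D x) (D x) = 0"
    using assms by (simp add: selfadjoint_def)
  then show "D x = 0" by simp
qed

section \<open>Orthogonal projections\<close>

lemma proj_idem: "is_proj P \<Longrightarrow> P (P x) = P x"
  by (metis comp_apply is_proj_def)

lemma proj_bounded_op: "is_proj P \<Longrightarrow> bounded_op P"
  by (simp add: is_proj_def SA_iff)

lemma proj_selfadjoint: "is_proj P \<Longrightarrow> selfadjoint P"
  by (simp add: is_proj_def SA_iff)

lemma proj_range_eq: "is_proj P \<Longrightarrow> range P = {x. P x = x}"
  by (auto simp: proj_idem) (metis rangeI)

lemma proj_fixes_range: "is_proj P \<Longrightarrow> x \<in> range P \<Longrightarrow> P x = x"
  by (simp add: proj_range_eq)

lemma proj_closed_range: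
  assumes "is_proj P" shows "closed (range P)"
proof -
  have "continuous_on UNIV P"
    using assms by (simp add: linear_continuous_on bounded_op_imp_bounded_linear proj_bounded_op)
  then show ?thesis
    unfolding proj_range_eq [OF assms] by (intro closed_Collect_eq continuous_on_id) auto
qed

lemma proj_orthogonal:
  assumes "is_proj P" shows "cinner (P z) (x - P x) = 0"
proof -
  have "cinner (P z) (P x) = cinner (P (P z)) x"
    using proj_selfadjoint [OF assms] by (simp add: selfadjoint_def)
  then show ?thesis
    by (simp add: cinner_diff_right proj_idem [OF assms])
qed

lemma proj_le_imp_comp_eq: "is_proj P \<Longrightarrow> is_proj Q \<Longrightarrow> proj_le P Q \<Longrightarrow> Q \<circ> P = P"
  unfolding proj_le_def by (rule selfadjoint_comp_swap) (simp_all add: proj_selfadjoint)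

lemma proj_le_iff_range_subset:
  assumes "is_proj P" "is_proj Q"
  shows "proj_le P Q \<longleftrightarrow> range P \<subseteq> range Q"
proof
  assume "proj_le P Q"
  then show "range P \<subseteq> range Q"
    using proj_le_imp_comp_eq [OF assms] by (metis comp_apply image_subset_iff rangeI)
next
  assume "range P \<subseteq> range Q"
  then have "Q \<circ> P = P"
    using proj_range_eq [OF assms(2)] by (auto simp: fun_eq_iff)
  then show "proj_le P Q"
    unfolding proj_le_def by (rule selfadjoint_comp_swap [rotated 3]) (simp_all add: proj_selfadjoint assms)
qed

lemma proj_le_antisym:
  assumes "is_proj P" "is_proj Q" "proj_le P Q" "proj_le Q P"
  shows "P = Q"
  using proj_le_imp_comp_eq [OF assms(1-3)] assms(4) by (simp add: proj_le_def)

lemma proj_eqI_range: "is_proj P \<Longrightarrow> is_proj Q \<Longrightarrow> range P = range Q \<Longrightarrow> P = Q"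
  by (simp add: proj_le_antisym proj_le_iff_range_subset)

lemma proj_le_refl: "is_proj P \<Longrightarrow> proj_le P P"
  by (simp add: proj_le_def is_proj_def)

lemma proj_meet_eqI:
  assumes "is_proj R" and "\<And>S. is_proj S \<Longrightarrow> proj_le S R \<longleftrightarrow> proj_le S P \<and> proj_le S Q"
  shows "proj_meet P Q = R"
  unfolding proj_meet_def
proof (rule the_equality)
  show "is_proj R \<and> proj_le R P \<and> proj_le R Q \<and>
      (\<forall>S. is_proj S \<and> proj_le S P \<and> proj_le S Q \<longrightarrow> proj_le S R)"
    using assms proj_le_refl by blast
  fix R' assume "is_proj R' \<and> proj_le R' P \<and> proj_le R' Q \<and>
      (\<forall>S. is_proj S \<and> proj_le S P \<and> proj_le S Q \<longrightarrow> proj_le S R')"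
  then show "R' = R"
    using assms proj_le_refl proj_le_antisym by meson
qed

lemma proj_join_eqI:
  assumes "is_proj R" and "\<And>S. is_proj S \<Longrightarrow> proj_le R S \<longleftrightarrow> proj_le P S \<and> proj_le Q S"
  shows "proj_join P Q = R"
  unfolding proj_join_def
proof (rule the_equality)
  show "is_proj R \<and> proj_le P R \<and> proj_le Q R \<and>
      (\<forall>S. is_proj S \<and> proj_le P S \<and> proj_le Q S \<longrightarrow> proj_le R S)"
    using assms proj_le_refl by blast
  fix R' assume "is_proj R' \<and> proj_le P R' \<and> proj_le Q R' \<and>
      (\<forall>S. is_proj S \<and> proj_le P S \<and> proj_le Q S \<longrightarrow> proj_le R' S)"
  then show "R' = R"
    using assms proj_le_refl proj_le_antisym by meson
qed

lemma selfadjoint_commute_proj: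
  assumes "selfadjoint T" "is_proj P" and "\<And>x. P x = x \<Longrightarrow> P (T x) = T x"
  shows "T \<circ> P = P \<circ> T"
proof -
  have TP: "T \<circ> P = P \<circ> T \<circ> P"
    using assms(3) proj_idem [OF assms(2)] by (auto simp: fun_eq_iff)
  have "selfadjoint (P \<circ> T \<circ> P)"
    using assms(1) proj_selfadjoint [OF assms(2)] by (simp add: selfadjoint_def)
  then have "selfadjoint (T \<circ> P)"
    by (simp only: TP)
  from selfadjoint_comp_swap [OF assms(1) proj_selfadjoint [OF assms(2)] this refl]
  show ?thesis by (rule sym)
qed

section \<open>The projection theorem\<close>

definition csubspace :: "'a::complex_hilbert set \<Rightarrow> bool" where
  "csubspace M \<longleftrightarrow> subspace M \<and> (\<forall>a. \<forall>x\<in>M. a *\<^sub>C x \<in> M)"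

lemma csubspace_scaleC: "csubspace M \<Longrightarrow> x \<in> M \<Longrightarrow> a *\<^sub>C x \<in> M"
  by (simp add: csubspace_def)

lemma csubspace_Int: "csubspace M \<Longrightarrow> csubspace N \<Longrightarrow> csubspace (M \<inter> N)"
  by (simp add: csubspace_def subspace_inter)

lemma csubspace_range: "bounded_op A \<Longrightarrow> csubspace (range A)"
  unfolding csubspace_def
  by (auto simp: linear_subspace_image bounded_linear.linear bounded_op_imp_bounded_linear
      bounded_op_scaleC [symmetric])

lemma csubspace_closure:
  assumes "csubspace M" shows "csubspace (closure M)"
proof -
  have M: "0 \<in> M" "\<And>x y. x \<in> M \<Longrightarrow> y \<in> M \<Longrightarrow> x + y \<in> M" "\<And>a x. x \<in> M \<Longrightarrow> a *\<^sub>C x \<in> M"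
    using assms by (auto simp: csubspace_def subspace_0 subspace_add)
  have add: "x + y \<in> closure M" if "x \<in> closure M" "y \<in> closure M" for x y
    using closure_sum [of M M] closure_mono [of "M + M" M] M(2) that
    by (force simp: set_plus_def)
  have scale: "a *\<^sub>C x \<in> closure M" if "x \<in> closure M" for a x
    using closure_bounded_linear_image_subset [OF bounded_linear_scaleC, of a M]
      closure_mono [of "(\<lambda>x. a *\<^sub>C x) ` M" M] M(3) that by blast
  show ?thesis
    unfolding csubspace_def subspace_def
    using M(1) closure_subset add scale by (auto simp: scaleR_scaleC)
qed

lemma convex_infdist_bound:
  fixes x :: "'a::complex_hilbert"
  assumes "convex M" "a \<in> M" "b \<in> M"
  shows "(norm (a - b))\<^sup>2 \<le> 2 * (norm (x - a))\<^sup>2 + 2 * (norm (x - b))\<^sup>2 - 4 * (infdist x M)\<^sup>2"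
proof -
  define m where "m = (1/2) *\<^sub>R a + (1/2) *\<^sub>R b"
  have "m \<in> M"
    using convexD [OF assms, of "1/2" "1/2"] by (simp add: m_def)
  then have "infdist x M \<le> norm (x - m)"
    by (metis infdist_le dist_norm)
  moreover have "(x - a) + (x - b) = 2 *\<^sub>R (x - m)"
    by (simp add: m_def algebra_simps scaleR_2)
  ultimately have "4 * (infdist x M)\<^sup>2 \<le> (norm ((x - a) + (x - b)))\<^sup>2"
    using infdist_nonneg power_mono by (fastforce simp: power_mult_distrib)
  moreover have "(norm ((x - a) - (x - b)))\<^sup>2 = (norm (a - b))\<^sup>2"
    by (simp add: norm_minus_commute)
  ultimately show ?thesis
    using parallelogram_law [of "x - a" "x - b"] by linarith
qed

lemma minimizing_sequence_Cauchy:
  fixes x :: "'a::complex_hilbert"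
  assumes "convex M" and "\<And>n. f n \<in> M"
    and "\<And>n. (norm (x - f n))\<^sup>2 < (infdist x M)\<^sup>2 + inverse (real (Suc n))"
  shows "Cauchy f"
proof (rule CauchyI)
  fix e :: real
  assume "0 < e"
  then obtain N where N: "inverse (real (Suc N)) < e\<^sup>2 / 4"
    using reals_Archimedean [of "e\<^sup>2 / 4"] by auto
  have "norm (f m - f n) < e" if "m \<ge> N" "n \<ge> N" for m n
  proof -
    have "inverse (real (Suc k)) \<le> inverse (real (Suc N))" if "k \<ge> N" for k
      using that by (simp add: le_imp_inverse_le)
    then have "inverse (real (Suc m)) \<le> inverse (real (Suc N))"
      and "inverse (real (Suc n)) \<le> inverse (real (Suc N))"
      using that by auto
    then have "(norm (f m - f n))\<^sup>2 < e\<^sup>2"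
      using convex_infdist_bound [OF assms(1,2,2), of m n x] assms(3) [of m] assms(3) [of n] N
      by linarith
    then show ?thesis
      using \<open>0 < e\<close> by (simp add: power_less_imp_less_base)
  qed
  then show "\<exists>N. \<forall>m\<ge>N. \<forall>n\<ge>N. norm (f m - f n) < e" by blast
qed

lemma infdist_approx_square:
  fixes x :: "'a::real_normed_vector"
  assumes "M \<noteq> {}" "e > 0"
  shows "\<exists>m\<in>M. (norm (x - m))\<^sup>2 < (infdist x M)\<^sup>2 + e"
proof -
  define s where "s = sqrt ((infdist x M)\<^sup>2 + e)"
  have "infdist x M < s"
    using infdist_nonneg [of x M] real_less_rsqrt [of "infdist x M"] assms(2) by (simp add: s_def)
  then have "(INF y\<in>M. dist x y) < s"
    by (simp add: infdist_notempty [OF assms(1)])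
  moreover have "bdd_below (dist x ` M)"
    by (rule bdd_belowI [of _ 0]) auto
  ultimately obtain m where "m \<in> M" "dist x m < s"
    using cINF_less_iff [OF assms(1)] by blast
  then have "(norm (x - m))\<^sup>2 < s\<^sup>2"
    by (simp add: dist_norm power_strict_mono)
  then show ?thesis
    using \<open>m \<in> M\<close> assms(2) infdist_nonneg [of x M] by (auto simp: s_def)
qed

lemma closest_point_exists:
  fixes x :: "'a::complex_hilbert"
  assumes "convex M" "closed M" "M \<noteq> {}"
  shows "\<exists>m\<in>M. \<forall>y\<in>M. norm (x - m) \<le> norm (x - y)"
proof -
  define d where "d = infdist x M"
  have "\<exists>m\<in>M. (norm (x - m))\<^sup>2 < d\<^sup>2 + inverse (real (Suc n))" for n
    using infdist_approx_square [OF assms(3), of "inverse (real (Suc n))" x] by (simp add: d_def)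
  then obtain f where f: "\<And>n. f n \<in> M" "\<And>n. (norm (x - f n))\<^sup>2 < d\<^sup>2 + inverse (real (Suc n))"
    by metis
  obtain L where L: "f \<longlonglongrightarrow> L"
    using minimizing_sequence_Cauchy [OF assms(1) f [unfolded d_def]] Cauchy_convergent_iff
      convergent_def by blast
  have "L \<in> M"
    using closed_sequentially [OF assms(2)] f(1) L by blast
  have "(norm (x - L))\<^sup>2 \<le> d\<^sup>2"
  proof (rule LIMSEQ_le)
    show "(\<lambda>n. (norm (x - f n))\<^sup>2) \<longlonglongrightarrow> (norm (x - L))\<^sup>2"
      using L by (intro tendsto_intros)
    show "(\<lambda>n. d\<^sup>2 + inverse (real (Suc n))) \<longlonglongrightarrow> d\<^sup>2"
      using tendsto_add [OF tendsto_const LIMSEQ_inverse_real_of_nat, of "d\<^sup>2"] by simp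
    show "\<exists>N. \<forall>n\<ge>N. (norm (x - f n))\<^sup>2 \<le> d\<^sup>2 + inverse (real (Suc n))"
      using f(2) less_imp_le by blast
  qed
  then have "norm (x - L) \<le> d"
    by (rule power2_le_imp_le) (simp add: d_def infdist_nonneg)
  moreover have "d \<le> norm (x - y)" if "y \<in> M" for y
    using infdist_le [OF that, of x] by (simp add: d_def dist_norm)
  ultimately show ?thesis
    using \<open>L \<in> M\<close> by (meson order_trans)
qed

lemma closest_point_orthogonal:
  fixes x :: "'a::complex_hilbert"
  assumes "csubspace M" "m \<in> M" "y \<in> M" and closest: "\<forall>y\<in>M. norm (x - m) \<le> norm (x - y)"
  shows "cinner y (x - m) = 0"
proof -
  define c where "c = cinner (x - m) y"
  have "c = 0"
  proof (rule ccontr)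
    assume "c \<noteq> 0"
    txt \<open>Compare with the competitor \<open>m + t y\<close>, \<open>t = s c\<^sup>*\<close>: the gain \<open>2 s |c|\<^sup>2\<close> beats the loss
      \<open>s\<^sup>2 |c|\<^sup>2 \<parallel>y\<parallel>\<^sup>2\<close> once \<open>s \<parallel>y\<parallel>\<^sup>2 < 1\<close>, and \<open>s = 1 / (\<parallel>y\<parallel>\<^sup>2 + 1)\<close> needs no \<open>y \<noteq> 0\<close>.\<close>
    define s where "s = 1 / ((norm y)\<^sup>2 + 1)"
    define t where "t = complex_of_real s * cnj c"
    have "(norm y)\<^sup>2 + 1 > 0"
      using zero_le_power2 [of "norm y"] by linarith
    then have "s > 0" "s * (norm y)\<^sup>2 < 1"
      by (simp_all add: s_def field_simps)
    have "m + t *\<^sub>C y \<in> M"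
      using assms by (simp add: csubspace_def subspace_add)
    then have "norm (x - m) \<le> norm ((x - m) - t *\<^sub>C y)"
      using closest by (metis diff_diff_eq)
    then have "(norm (x - m))\<^sup>2 \<le> (norm ((x - m) - t *\<^sub>C y))\<^sup>2"
      by (rule power_mono) simp
    also have "\<dots> = (norm (x - m))\<^sup>2 + (s * cmod c)\<^sup>2 * (norm y)\<^sup>2 - 2 * (s * (cmod c)\<^sup>2)"
    proof -
      have "t * c = complex_of_real (s * (cmod c)\<^sup>2)"
        by (simp add: t_def complex_norm_square mult.assoc mult.commute del: of_real_power)
      moreover have "cmod t = s * cmod c"
        using \<open>s > 0\<close> by (simp add: t_def norm_mult)
      ultimately show ?thesis
        by (simp add: power2_norm_diff norm_scaleC cinner_scaleC_right c_def power_mult_distrib)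
    qed
    finally have "0 \<le> s * (cmod c)\<^sup>2 * (s * (norm y)\<^sup>2 - 2)"
      by (simp add: algebra_simps power2_eq_square)
    moreover have "s * (cmod c)\<^sup>2 * (s * (norm y)\<^sup>2 - 2) < 0"
      using \<open>s > 0\<close> \<open>s * (norm y)\<^sup>2 < 1\<close> \<open>c \<noteq> 0\<close> by (intro mult_pos_neg) auto
    ultimately show False by simp
  qed
  then show ?thesis
    by (metis c_def cinner_commute complex_cnj_zero)
qed

lemma orthogonal_residual_unique:
  fixes x :: "'a::complex_hilbert"
  assumes "csubspace M" "m \<in> M" "m' \<in> M"
    and "\<forall>y\<in>M. cinner y (x - m) = 0" "\<forall>y\<in>M. cinner y (x - m') = 0"
  shows "m = m'"
proof -
  have "m' - m \<in> M"
    using assms by (simp add: csubspace_def subspace_diff)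
  then have "cinner (m' - m) ((x - m) - (x - m')) = 0"
    using assms(4,5) by (simp add: cinner_diff_right)
  then show ?thesis by simp
qed

lemma orthogonal_residual_exists:
  fixes x :: "'a::complex_hilbert"
  assumes "csubspace M" "closed M"
  shows "\<exists>m\<in>M. \<forall>y\<in>M. cinner y (x - m) = 0"
proof -
  have "convex M" "M \<noteq> {}"
    using assms(1) by (auto simp: csubspace_def subspace_imp_convex dest: subspace_0)
  then obtain m where "m \<in> M" "\<forall>y\<in>M. norm (x - m) \<le> norm (x - y)"
    using closest_point_exists [OF _ assms(2)] by blast
  then show ?thesis
    using closest_point_orthogonal [OF assms(1)] by blast
qed

lemma selfadjoint_if_range_orthogonal:
  assumes "\<And>z x. cinner (P z) (x - P x) = 0"
  shows "selfadjoint P"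
  unfolding selfadjoint_def
proof (intro allI)
  fix x y
  have "cinner (P y) (P x) = cinner (P y) x"
    using assms [of y x] by (simp add: cinner_diff_right)
  then have "cinner (P x) (P y) = cinner x (P y)"
    by (metis cinner_commute)
  moreover have "cinner (P x) y = cinner (P x) (P y)"
    using assms [of x y] by (simp add: cinner_diff_right)
  ultimately show "cinner (P x) y = cinner x (P y)" by simp
qed

lemma norm_le_if_range_orthogonal:
  fixes P :: "'a::complex_hilbert \<Rightarrow> 'a"
  assumes "\<And>z x. cinner (P z) (x - P x) = 0"
  shows "norm (P x) \<le> norm x"
proof -
  have "(norm x)\<^sup>2 = (norm (P x))\<^sup>2 + (norm (x - P x))\<^sup>2"
    using power2_norm_add [of "P x" "x - P x"] assms by simp
  then show ?thesis
    by (simp add: power2_le_imp_le)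
qed

lemma orthogonal_projection_is_proj:
  fixes P :: "'a::complex_hilbert \<Rightarrow> 'a"
  assumes M: "csubspace M" and P: "\<And>x. P x \<in> M" "\<And>x y. y \<in> M \<Longrightarrow> cinner y (x - P x) = 0"
  shows "is_proj P" and "range P = M"
proof -
  have unique: "P x = m" if "m \<in> M" "\<forall>y\<in>M. cinner y (x - m) = 0" for x m
    using orthogonal_residual_unique [OF M P(1) that(1)] P(2) that(2) by blast
  have fixes_M: "P m = m" if "m \<in> M" for m
    using unique that by simp
  have orth: "cinner (P z) (x - P x) = 0" for z x
    using P by blast
  have "P (x + y) = P x + P y" for x y
  proof (rule unique)
    show "P x + P y \<in> M"
      using P(1) M by (simp add: csubspace_def subspace_add)
    have "x + y - (P x + P y) = (x - P x) + (y - P y)"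
      by (simp add: algebra_simps)
    then show "\<forall>z\<in>M. cinner z (x + y - (P x + P y)) = 0"
      using P(2) by (simp only: cinner_add_right) simp
  qed
  moreover have "P (a *\<^sub>C x) = a *\<^sub>C P x" for a x
  proof (rule unique)
    show "a *\<^sub>C P x \<in> M"
      using P(1) M by (simp add: csubspace_scaleC)
    have "a *\<^sub>C x - a *\<^sub>C P x = a *\<^sub>C (x - P x)"
      by (simp add: linear_diff [OF bounded_linear.linear [OF bounded_linear_scaleC]])
    then show "\<forall>z\<in>M. cinner z (a *\<^sub>C x - a *\<^sub>C P x) = 0"
      using P(2) by (simp add: cinner_scaleC_right)
  qed
  moreover have "norm (P x) \<le> norm x * 1" for x
    using norm_le_if_range_orthogonal [OF orth] by simp
  ultimately have "bounded_op P"
    unfolding bounded_op_def by blast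
  moreover have "P \<circ> P = P"
    using fixes_M P(1) by (simp add: fun_eq_iff)
  ultimately show "is_proj P"
    using selfadjoint_if_range_orthogonal [OF orth] by (simp add: is_proj_def SA_iff)
  show "range P = M"
    using P(1) fixes_M by (auto intro: range_eqI [OF sym])
qed

theorem proj_exists:
  fixes M :: "'a::complex_hilbert set"
  assumes "csubspace M" "closed M"
  shows "\<exists>P. is_proj P \<and> range P = M"
proof -
  obtain P where P: "\<And>x. P x \<in> M" "\<And>x y. y \<in> M \<Longrightarrow> cinner y (x - P x) = 0"
    using orthogonal_residual_exists [OF assms] by metis
  show ?thesis
    using orthogonal_projection_is_proj [OF assms(1) P] by blast
qed

section \<open>Range projections, meets and joins\<close>

lemma
  fixes A :: "'a::complex_hilbert \<Rightarrow> 'a"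
  assumes "bounded_op A"
  shows is_proj_range_proj: "is_proj (range_proj A)"
    and range_range_proj: "range (range_proj A) = closure (range A)"
proof -
  obtain P where P: "is_proj P" "range P = closure (range A)"
    using proj_exists [OF csubspace_closure [OF csubspace_range [OF assms]] closed_closure] by blast
  have "range_proj A = P"
    unfolding range_proj_def
  proof (rule the_equality)
    show "is_proj P \<and> range P = closure (range A)"
      using P by simp
    show "Q = P" if "is_proj Q \<and> range Q = closure (range A)" for Q
      using that P proj_eqI_range by metis
  qed
  then show "is_proj (range_proj A)" "range (range_proj A) = closure (range A)"
    using P by simp_all
qed

lemma comp_range_proj:
  assumes "X \<in> SA" shows "X \<circ> range_proj X = X"
proof
  fix x
  define P where "P = range_proj X"
  have X: "bounded_op X" "selfadjoint X"
    using assms by (simp_all add: SA_iff)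
  have P: "is_proj P" "range P = closure (range X)"
    using is_proj_range_proj range_range_proj X(1) by (simp_all add: P_def)
  define y where "y = x - P x"
  have "X (X y) \<in> range P"
    using P(2) closure_subset by (metis rangeI subsetD)
  then have "P (X (X y)) = X (X y)"
    by (rule proj_fixes_range [OF P(1)])
  moreover have "cinner (X y) (X y) = cnj (cinner (X (X y)) y)"
    using X(2) cinner_commute [of y "X (X y)"] by (simp add: selfadjoint_def)
  ultimately have "cinner (X y) (X y) = cnj (cinner (P (X (X y))) y)"
    by simp
  then have "X y = 0"
    using proj_orthogonal [OF P(1)] by (simp add: y_def)
  then show "(X \<circ> range_proj X) x = X x"
    using bounded_op_diff [OF X(1)] by (simp add: y_def P_def)
qed

lemma range_proj_mono:
  assumes "bounded_op X" "bounded_op Y" "range X \<subseteq> range Y"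
  shows "proj_le (range_proj X) (range_proj Y)"
  using assms closure_mono [OF assms(3)]
  by (simp add: proj_le_iff_range_subset is_proj_range_proj range_range_proj)

lemma
  fixes P Q :: "'a::complex_hilbert \<Rightarrow> 'a"
  assumes "is_proj P" "is_proj Q"
  shows is_proj_proj_meet: "is_proj (proj_meet P Q)"
    and range_proj_meet: "range (proj_meet P Q) = range P \<inter> range Q"
proof -
  obtain R where R: "is_proj R" "range R = range P \<inter> range Q"
    using proj_exists [OF csubspace_Int closed_Int] csubspace_range proj_bounded_op
      proj_closed_range assms by metis
  have "proj_meet P Q = R"
    using R assms by (intro proj_meet_eqI) (simp_all add: proj_le_iff_range_subset)
  then show "is_proj (proj_meet P Q)" "range (proj_meet P Q) = range P \<inter> range Q"
    using R by simp_all
qed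

definition compl_proj :: "('a::complex_hilbert \<Rightarrow> 'a) \<Rightarrow> 'a \<Rightarrow> 'a" where
  "compl_proj P = (\<lambda>x. x - P x)"

lemma compl_proj_compl_proj [simp]: "compl_proj (compl_proj P) = P"
  by (simp add: compl_proj_def)

lemma is_proj_compl_proj:
  assumes "is_proj P" shows "is_proj (compl_proj P)"
proof -
  have "compl_proj P \<in> SA"
    unfolding compl_proj_def SA_iff
    using bounded_op_fun_diff [OF bounded_op_id proj_bounded_op [OF assms]]
      selfadjoint_fun_diff [OF selfadjoint_id proj_selfadjoint [OF assms]] by (rule conjI)
  moreover have "compl_proj P \<circ> compl_proj P = compl_proj P"
    using bounded_op_diff [OF proj_bounded_op [OF assms]] proj_idem [OF assms]
    by (simp add: compl_proj_def fun_eq_iff)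
  ultimately show ?thesis
    by (simp add: is_proj_def)
qed

lemma proj_le_compl_proj:
  assumes "is_proj P" "is_proj Q" "proj_le P Q"
  shows "proj_le (compl_proj Q) (compl_proj P)"
proof -
  have "Q (P x) = P x" for x
    using proj_le_imp_comp_eq [OF assms] by (metis comp_apply)
  then have "Q (x - P x) = Q x - P x" for x
    using bounded_op_diff [OF proj_bounded_op [OF assms(2)]] by simp
  then show ?thesis
    by (simp add: proj_le_def compl_proj_def fun_eq_iff)
qed

lemma proj_le_compl_proj_iff:
  assumes "is_proj P" "is_proj Q"
  shows "proj_le (compl_proj Q) (compl_proj P) \<longleftrightarrow> proj_le P Q"
proof
  assume "proj_le (compl_proj Q) (compl_proj P)"
  from proj_le_compl_proj [OF is_proj_compl_proj [OF assms(2)] is_proj_compl_proj [OF assms(1)] this]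
  show "proj_le P Q" by simp
qed (rule proj_le_compl_proj [OF assms])

lemma
  fixes P Q :: "'a::complex_hilbert \<Rightarrow> 'a"
  assumes "is_proj P" "is_proj Q"
  shows proj_join_eq_compl_proj_meet:
      "proj_join P Q = compl_proj (proj_meet (compl_proj P) (compl_proj Q))"
    and is_proj_proj_join: "is_proj (proj_join P Q)"
    and proj_le_proj_join1: "proj_le P (proj_join P Q)"
    and proj_le_proj_join2: "proj_le Q (proj_join P Q)"
proof -
  define E where "E = proj_meet (compl_proj P) (compl_proj Q)"
  have P': "is_proj (compl_proj P)" and Q': "is_proj (compl_proj Q)"
    using assms by (simp_all add: is_proj_compl_proj)
  have E: "is_proj E" "range E = range (compl_proj P) \<inter> range (compl_proj Q)"
    using is_proj_proj_meet [OF P' Q'] range_proj_meet [OF P' Q'] by (simp_all add: E_def)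
  have E': "is_proj (compl_proj E)"
    using E(1) by (rule is_proj_compl_proj)
  have upper_iff: "proj_le (compl_proj E) S \<longleftrightarrow> proj_le P S \<and> proj_le Q S" if S: "is_proj S" for S
  proof -
    have "proj_le (compl_proj E) S \<longleftrightarrow> proj_le (compl_proj S) E"
      using proj_le_compl_proj_iff [OF E' S] by simp
    also have "\<dots> \<longleftrightarrow>
        proj_le (compl_proj S) (compl_proj P) \<and> proj_le (compl_proj S) (compl_proj Q)"
      using is_proj_compl_proj [OF S] P' Q' E
      by (simp add: proj_le_iff_range_subset)
    also have "\<dots> \<longleftrightarrow> proj_le P S \<and> proj_le Q S"
      using assms S by (simp add: proj_le_compl_proj_iff)
    finally show ?thesis .
  qed
  have join: "proj_join P Q = compl_proj E"
    using E' upper_iff by (rule proj_join_eqI) simp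
  then show "proj_join P Q = compl_proj (proj_meet (compl_proj P) (compl_proj Q))"
    and "is_proj (proj_join P Q)"
    using E' by (simp_all add: E_def)
  show "proj_le P (proj_join P Q)" "proj_le Q (proj_join P Q)"
    using upper_iff [OF E'] proj_le_refl [OF E'] by (simp_all add: join)
qed

lemma proj_meet_fixed_iff:
  assumes "is_proj P" "is_proj Q"
  shows "proj_meet P Q x = x \<longleftrightarrow> P x = x \<and> Q x = x"
proof -
  have "proj_meet P Q x = x \<longleftrightarrow> x \<in> range (proj_meet P Q)"
    by (simp add: proj_range_eq [OF is_proj_proj_meet [OF assms]])
  also have "\<dots> \<longleftrightarrow> P x = x \<and> Q x = x"
    by (simp add: range_proj_meet [OF assms] proj_range_eq assms)
  finally show ?thesis .
qed

lemma proj_meet_commute: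
  assumes "selfadjoint T" "is_proj P" "is_proj Q"
    and "T \<circ> P = P \<circ> T" "T \<circ> Q = Q \<circ> T"
  shows "T \<circ> proj_meet P Q = proj_meet P Q \<circ> T"
proof (rule selfadjoint_commute_proj [OF assms(1) is_proj_proj_meet [OF assms(2,3)]])
  fix x
  assume "proj_meet P Q x = x"
  then have "P x = x" "Q x = x"
    using proj_meet_fixed_iff [OF assms(2,3)] by simp_all
  then have "P (T x) = T x" "Q (T x) = T x"
    using fun_cong [OF assms(4), of x] fun_cong [OF assms(5), of x] by simp_all
  then show "proj_meet P Q (T x) = T x"
    using proj_meet_fixed_iff [OF assms(2,3)] by simp
qed

lemma compl_proj_commute:
  assumes "bounded_op T" "T \<circ> P = P \<circ> T"
  shows "T \<circ> compl_proj P = compl_proj P \<circ> T"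
  using bounded_op_diff [OF assms(1)] fun_cong [OF assms(2)]
  by (simp add: compl_proj_def fun_eq_iff)

lemma proj_join_commute:
  assumes "bounded_op T" "selfadjoint T" "is_proj P" "is_proj Q"
    and "T \<circ> P = P \<circ> T" "T \<circ> Q = Q \<circ> T"
  shows "T \<circ> proj_join P Q = proj_join P Q \<circ> T"
proof -
  have "T \<circ> proj_meet (compl_proj P) (compl_proj Q) = proj_meet (compl_proj P) (compl_proj Q) \<circ> T"
    by (rule proj_meet_commute) (simp_all add: assms is_proj_compl_proj compl_proj_commute)
  then show ?thesis
    by (simp add: proj_join_eq_compl_proj_meet [OF assms(3,4)] compl_proj_commute [OF assms(1)])
qed

text \<open>By self-adjointness \<open>X\<close> maps into \<open>ker P \<inter> ker Q\<close>, the range of the complement of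
  \<open>P \<or> Q\<close>.\<close>
lemma selfadjoint_comp_proj_join_eq_zero:
  assumes "selfadjoint X" "is_proj P" "is_proj Q"
    and "X \<circ> P = (\<lambda>_. 0)" "X \<circ> Q = (\<lambda>_. 0)"
  shows "X \<circ> proj_join P Q = (\<lambda>_. 0)"
proof -
  have "P \<circ> X = (\<lambda>_. 0)" "Q \<circ> X = (\<lambda>_. 0)"
    using selfadjoint_comp_swap [OF assms(1) proj_selfadjoint selfadjoint_zero] assms by simp_all
  then have "compl_proj P (X x) = X x" "compl_proj Q (X x) = X x" for x
    by (simp_all add: compl_proj_def fun_eq_iff)
  then have "proj_meet (compl_proj P) (compl_proj Q) (X x) = X x" for x
    using proj_meet_fixed_iff is_proj_compl_proj assms(2,3) by blast
  then have "proj_join P Q \<circ> X = (\<lambda>_. 0)"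
    by (simp add: proj_join_eq_compl_proj_meet [OF assms(2,3)] compl_proj_def fun_eq_iff)
  from selfadjoint_comp_swap [OF proj_selfadjoint [OF is_proj_proj_join [OF assms(2,3)]]
      assms(1) selfadjoint_zero this]
  show ?thesis .
qed

section \<open>The logical order\<close>

lemma logical_leI:
  assumes "X \<in> SA" "Y \<in> SA" "is_proj Q" and X: "X = Y \<circ> Q"
  shows "logical_le X Y"
proof -
  have "Q \<circ> Y = X"
    by (rule selfadjoint_comp_swap) (use assms in \<open>simp_all add: SA_iff proj_selfadjoint\<close>)
  then have QYx: "Q (Y x) = X x" for x
    by (metis comp_apply)
  define D where "D = (\<lambda>x. Y x - X x)"
  have "D \<in> SA"
    using assms(1,2) by (simp add: D_def SA_iff bounded_op_fun_diff selfadjoint_fun_diff)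
  moreover have XD: "X (D x) = 0" for x
  proof -
    have "Q (D x) = 0"
      using bounded_op_diff [OF proj_bounded_op [OF assms(3)]] QYx proj_idem [OF assms(3)]
      by (simp add: D_def X)
    moreover have "Y 0 = 0"
      using assms(2) by (simp add: SA_iff bounded_op_zero)
    ultimately show ?thesis
      by (simp add: X)
  qed
  moreover have "Y = (\<lambda>x. X x + D x)" "X \<circ> D = (\<lambda>_. 0)"
    using XD by (simp_all add: D_def fun_eq_iff)
  ultimately show ?thesis
    unfolding logical_le_def by blast
qed

lemma logical_le_imp_eq_comp_range_proj:
  assumes "X \<in> SA" "logical_le X Y"
  shows "X = Y \<circ> range_proj X"
proof -
  obtain D where D: "D \<in> SA" "Y = (\<lambda>x. X x + D x)" "X \<circ> D = (\<lambda>_. 0)"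
    using assms(2) by (auto simp: logical_le_def)
  have X: "bounded_op X" "selfadjoint X"
    using assms(1) by (simp_all add: SA_iff)
  have "D \<circ> X = (\<lambda>_. 0)"
    using selfadjoint_comp_swap [OF X(2) _ selfadjoint_zero D(3)] D(1) by (simp add: SA_iff)
  then have "range X \<subseteq> {v. D v = 0}"
    by (auto simp: fun_eq_iff)
  moreover have "closed {v. D v = 0}"
    using D(1) by (intro closed_Collect_eq continuous_on_const linear_continuous_on
        bounded_op_imp_bounded_linear) (simp_all add: SA_iff)
  ultimately have "D (range_proj X x) = 0" for x
    using range_range_proj [OF X(1)] closure_minimal by blast
  then have "Y (range_proj X x) = X x" for x
    using D(2) fun_cong [OF comp_range_proj [OF assms(1)], of x] by simp
  then show ?thesis
    by (simp add: fun_eq_iff)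
qed

lemma logical_le_antisym:
  assumes "X \<in> SA" "logical_le X Y" "logical_le Y X"
  shows "X = Y"
proof -
  obtain D where D: "D \<in> SA" "Y = (\<lambda>x. X x + D x)" "X \<circ> D = (\<lambda>_. 0)"
    using assms(2) by (auto simp: logical_le_def)
  obtain E where E: "X = (\<lambda>x. Y x + E x)" "Y \<circ> E = (\<lambda>_. 0)"
    using assms(3) by (auto simp: logical_le_def)
  have bD: "bounded_op D" and bX: "bounded_op X"
    using D(1) assms(1) by (simp_all add: SA_iff)
  have "E x = - D x" for x
  proof -
    have "X x = X x + D x + E x"
      using fun_cong [OF E(1), of x] fun_cong [OF D(2), of x] by simp
    then show ?thesis
      by (simp add: add.assoc eq_neg_iff_add_eq_0 add.commute)
  qed
  then have "D (D x) = 0" for x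
    using fun_cong [OF E(2), of x] fun_cong [OF D(3), of x] D(2)
    by (simp add: bounded_op_minus [OF bD] bounded_op_minus [OF bX])
  moreover have "selfadjoint D"
    using D(1) by (simp add: SA_iff)
  ultimately have "D = (\<lambda>_. 0)"
    using selfadjoint_nilpotent_eq_zero by blast
  then show ?thesis
    using D(2) by simp
qed

lemma logical_le_imp_commute_range_proj:
  assumes "X \<in> SA" "Y \<in> SA" "logical_le X Y"
  shows "Y \<circ> range_proj X = range_proj X \<circ> Y"
proof -
  have YP: "Y \<circ> range_proj X = X"
    using logical_le_imp_eq_comp_range_proj [OF assms(1,3)] by simp
  have "range_proj X \<circ> Y = X"
    by (rule selfadjoint_comp_swap [OF _ _ _ YP])
      (use assms in \<open>simp_all add: SA_imp_bounded_op SA_imp_selfadjoint proj_selfadjoint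
        is_proj_range_proj\<close>)
  with YP show ?thesis by simp
qed

lemma is_logical_meet_unique:
  assumes "is_logical_meet A B M" "is_logical_meet A B M'"
  shows "M = M'"
  using assms logical_le_antisym unfolding is_logical_meet_def by blast

lemma is_logical_join_unique:
  assumes "is_logical_join A B J" "is_logical_join A B J'"
  shows "J = J'"
  using assms logical_le_antisym unfolding is_logical_join_def by blast

lemma logical_le_imp_proj_le_range_proj:
  assumes "X \<in> SA" "Y \<in> SA" "logical_le X Y"
  shows "proj_le (range_proj X) (range_proj Y)"
proof -
  have "range X \<subseteq> range Y"
    using logical_le_imp_eq_comp_range_proj [OF assms(1,3)] by (metis image_comp image_subset_iff rangeI)
  then show ?thesis
    using assms(1,2) by (simp add: SA_imp_bounded_op range_proj_mono)
qed

lemma logical_le_comp_proj_mono: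
  assumes "C \<circ> P \<in> SA" "C \<circ> Q \<in> SA" "is_proj P" "is_proj Q" "proj_le P Q"
  shows "logical_le (C \<circ> P) (C \<circ> Q)"
proof (rule logical_leI [OF assms(1,2,3)])
  show "C \<circ> P = (C \<circ> Q) \<circ> P"
    using proj_le_imp_comp_eq [OF assms(3-5)] by (simp add: comp_assoc)
qed

lemma is_logical_meet_comp_proj_meet:
  assumes SA: "A \<in> SA" "B \<in> SA" "C \<in> SA"
    and le: "logical_le A C" "logical_le B C"
  shows "is_logical_meet A B (C \<circ> proj_meet (range_proj A) (range_proj B))"
proof -
  define PA PB where "PA = range_proj A" and "PB = range_proj B"
  define R where "R = proj_meet PA PB"
  have proj: "is_proj PA" "is_proj PB" "is_proj R"
    using SA by (simp_all add: PA_def PB_def R_def SA_imp_bounded_op is_proj_range_proj is_proj_proj_meet)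
  have A: "A = C \<circ> PA" and B: "B = C \<circ> PB"
    unfolding PA_def PB_def using logical_le_imp_eq_comp_range_proj SA le by blast+
  have CR: "C \<circ> R = R \<circ> C"
    using proj_meet_commute [of C PA PB] proj logical_le_imp_commute_range_proj [OF _ SA(3)] SA le
    by (simp add: R_def PA_def PB_def SA_imp_selfadjoint)
  have M: "C \<circ> R \<in> SA"
    using SA_comp [OF SA(3) _ CR] proj(3) unfolding is_proj_def by blast
  have R_le: "proj_le S R \<longleftrightarrow> proj_le S PA \<and> proj_le S PB" if "is_proj S" for S
    using that proj by (simp add: proj_le_iff_range_subset R_def range_proj_meet)
  have lower: "logical_le (C \<circ> R) A" "logical_le (C \<circ> R) B"
    using logical_le_comp_proj_mono [OF M] SA proj R_le [OF proj(3)] proj_le_refl [OF proj(3)]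
    by (simp_all add: A B)
  have "logical_le N (C \<circ> R)" if N: "N \<in> SA" "logical_le N A" "logical_le N B" for N
  proof -
    define PN where "PN = range_proj N"
    have PN: "is_proj PN"
      using N(1) by (simp add: PN_def SA_imp_bounded_op is_proj_range_proj)
    have "proj_le PN PA" "proj_le PN PB"
      using logical_le_imp_proj_le_range_proj N SA by (simp_all add: PN_def PA_def PB_def)
    moreover have "N = A \<circ> PN"
      unfolding PN_def using logical_le_imp_eq_comp_range_proj N by blast
    ultimately have "N = C \<circ> PN"
      using proj_le_imp_comp_eq [OF PN proj(1)] by (simp add: A comp_assoc)
    then show ?thesis
      using logical_le_comp_proj_mono [OF _ M PN proj(3)] N(1) R_le [OF PN]
        \<open>proj_le PN PA\<close> \<open>proj_le PN PB\<close> by simp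
  qed
  then show ?thesis
    unfolding is_logical_meet_def using M lower by (simp add: R_def PA_def PB_def)
qed

lemma is_logical_join_comp_proj_join:
  assumes SA: "A \<in> SA" "B \<in> SA" "C \<in> SA"
    and le: "logical_le A C" "logical_le B C"
  shows "is_logical_join A B (C \<circ> proj_join (range_proj A) (range_proj B))"
proof -
  define PA PB where "PA = range_proj A" and "PB = range_proj B"
  define S where "S = proj_join PA PB"
  have proj: "is_proj PA" "is_proj PB" "is_proj S"
    using SA by (simp_all add: PA_def PB_def S_def SA_imp_bounded_op is_proj_range_proj is_proj_proj_join)
  have A: "A = C \<circ> PA" and B: "B = C \<circ> PB"
    unfolding PA_def PB_def using logical_le_imp_eq_comp_range_proj SA le by blast+
  have CS: "C \<circ> S = S \<circ> C"
    using proj_join_commute [of C PA PB] proj logical_le_imp_commute_range_proj [OF _ SA(3)] SA le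
    by (simp add: S_def PA_def PB_def SA_imp_bounded_op SA_imp_selfadjoint)
  have J: "C \<circ> S \<in> SA"
    using SA_comp [OF SA(3) _ CS] proj(3) unfolding is_proj_def by blast
  have upper: "logical_le A (C \<circ> S)" "logical_le B (C \<circ> S)"
    using logical_le_comp_proj_mono [OF _ J] SA proj
    by (simp_all add: A B S_def proj_le_proj_join1 proj_le_proj_join2)
  have "logical_le (C \<circ> S) N" if N: "N \<in> SA" "logical_le A N" "logical_le B N" for N
  proof -
    define X where "X = (\<lambda>x. N x - C x)"
    have "A = N \<circ> PA" "B = N \<circ> PB"
      unfolding PA_def PB_def using logical_le_imp_eq_comp_range_proj SA N by blast+
    then have "N \<circ> PA = C \<circ> PA" "N \<circ> PB = C \<circ> PB"
      using A B by simp_all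
    then have "X \<circ> PA = (\<lambda>_. 0)" "X \<circ> PB = (\<lambda>_. 0)"
      by (simp_all add: X_def fun_eq_iff)
    moreover have "selfadjoint X"
      using N(1) SA(3) by (simp add: X_def SA_imp_selfadjoint selfadjoint_fun_diff)
    ultimately have "X \<circ> S = (\<lambda>_. 0)"
      using selfadjoint_comp_proj_join_eq_zero proj by (simp add: S_def)
    then have "C \<circ> S = N \<circ> S"
      by (simp add: X_def fun_eq_iff)
    then show ?thesis
      using logical_leI [OF J N(1) proj(3)] by blast
  qed
  then show ?thesis
    unfolding is_logical_join_def using J upper by (simp add: S_def PA_def PB_def)
qed

theorem corollary3:
  fixes A B C :: "'a::complex_hilbert \<Rightarrow> 'a"
  assumes "A \<in> SA" and "B \<in> SA" and "C \<in> SA"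
    and "logical_le A C" and "logical_le B C"
  shows "is_logical_meet A B (C \<circ> proj_meet (range_proj A) (range_proj B))
       \<and> (\<forall>M. is_logical_meet A B M \<longrightarrow> M = C \<circ> proj_meet (range_proj A) (range_proj B))
       \<and> is_logical_join A B (C \<circ> proj_join (range_proj A) (range_proj B))
       \<and> (\<forall>J. is_logical_join A B J \<longrightarrow> J = C \<circ> proj_join (range_proj A) (range_proj B))"
proof -
  have "is_logical_meet A B (C \<circ> proj_meet (range_proj A) (range_proj B))"
    using assms by (rule is_logical_meet_comp_proj_meet)
  moreover have "is_logical_join A B (C \<circ> proj_join (range_proj A) (range_proj B))"
    using assms by (rule is_logical_join_comp_proj_join)
  ultimately show ?thesis
    using is_logical_meet_unique is_logical_join_unique by blast
qed

end
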